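(* Let $\mathbb{E}$ be a regular category, $\Sigma$ a fibrational class of split epimorphisms, and suppose $\mathbb{E}$ is a $\Sigma$-Mal'tsev category. Let $f\colon X\to Y$ be a regular epimorphism and $S$ a $\Sigma$-relation on $X$. Then the direct image $f(S)$ of $S$ along $f$ is a transitive relation on $Y$. In particular, the direct image along a regular epimorphism of a $\Sigma$-equivalence relation is an equivalence relation.
   Context: A split epimorphism is a pair $(f,s)$ with $fs=1$. A class $\Sigma$ of split epimorphisms is fibrational if it contains all split epimorphisms $(f,s)$ with $f$ invertible and is stable under pullback along any morphism. A pair of morphisms with common codomain $Z$ is jointly extremally epic if it factors jointly through no non-invertible monomorphism into $Z$. $\mathbb{E}$ is $\Sigma$-Mal'tsev if for every split epimorphism $(f,s)\colon X\rightleftarrows Y$ in $\Sigma$ and every split epimorphism $(g,t)$ with $g\colon Y'\to Y$, letting $X'=Y'\times_YX$, $s'=(1_{Y'},sg)$, $\bar t=(tf,1_X)$, the pair $(s',\bar t)$ is jointly extremally epic. A $\Sigma$-relation is a reflexive relation $(d_0,d_1)\colon S\rightarrowtail X\times X$ with reflexivity $s_0$ such that $(d_0,s_0)\in\Sigma$; a $\Sigma$-equivalence relation is an equivalence relation which is a $\Sigma$-relation. The direct image $f(S)$ is the image (regular epi–mono factorization) of $(f\times f)\circ(d_0,d_1)\colon S\to Y\times Y$. *)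

theory Defs
  imports Main
begin

record ('o, 'a) cat =
  Obj :: "'o set"
  Arr :: "'a set"
  Dom :: "'a \<Rightarrow> 'o"
  Cod :: "'a \<Rightarrow> 'o"
  Id  :: "'o \<Rightarrow> 'a"
  Comp :: "'a \<Rightarrow> 'a \<Rightarrow> 'a"  \<comment> \<open>Comp C g f = g \<circ> f\<close>

definition hom :: "('o,'a) cat \<Rightarrow> 'a \<Rightarrow> 'o \<Rightarrow> 'o \<Rightarrow> bool" where
  "hom C f X Y \<longleftrightarrow> f \<in> Arr C \<and> Dom C f = X \<and> Cod C f = Y"

definition category :: "('o,'a) cat \<Rightarrow> bool" where
  "category C \<longleftrightarrow>
     (\<forall>f \<in> Arr C. Dom C f \<in> Obj C \<and> Cod C f \<in> Obj C) \<and>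
     (\<forall>X \<in> Obj C. hom C (Id C X) X X) \<and>
     (\<forall>f g. f \<in> Arr C \<and> g \<in> Arr C \<and> Cod C f = Dom C g \<longrightarrow>
        hom C (Comp C g f) (Dom C f) (Cod C g)) \<and>
     (\<forall>f g h. f \<in> Arr C \<and> g \<in> Arr C \<and> h \<in> Arr C \<and> Cod C f = Dom C g \<and> Cod C g = Dom C h \<longrightarrow>
        Comp C h (Comp C g f) = Comp C (Comp C h g) f) \<and>
     (\<forall>f \<in> Arr C. Comp C f (Id C (Dom C f)) = f \<and> Comp C (Id C (Cod C f)) f = f)"

definition mono :: "('o,'a) cat \<Rightarrow> 'a \<Rightarrow> bool" where
  "mono C m \<longleftrightarrow> m \<in> Arr C \<and>
     (\<forall>g h. g \<in> Arr C \<and> h \<in> Arr C \<and> Cod C g = Dom C m \<and> Cod C h = Dom C m \<and>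
        Dom C g = Dom C h \<and> Comp C m g = Comp C m h \<longrightarrow> g = h)"

definition iso :: "('o,'a) cat \<Rightarrow> 'a \<Rightarrow> bool" where
  "iso C f \<longleftrightarrow> f \<in> Arr C \<and> (\<exists>g. hom C g (Cod C f) (Dom C f) \<and>
      Comp C g f = Id C (Dom C f) \<and> Comp C f g = Id C (Cod C f))"

definition split_epi :: "('o,'a) cat \<Rightarrow> 'a \<Rightarrow> 'a \<Rightarrow> bool" where
  "split_epi C f s \<longleftrightarrow> f \<in> Arr C \<and> hom C s (Cod C f) (Dom C f) \<and> Comp C f s = Id C (Cod C f)"

definition coequalizer :: "('o,'a) cat \<Rightarrow> 'a \<Rightarrow> 'a \<Rightarrow> 'a \<Rightarrow> bool" where
  "coequalizer C u v e \<longleftrightarrow>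
     u \<in> Arr C \<and> v \<in> Arr C \<and> e \<in> Arr C \<and> Dom C u = Dom C v \<and> Cod C u = Cod C v \<and>
     Dom C e = Cod C u \<and> Comp C e u = Comp C e v \<and>
     (\<forall>h Z. hom C h (Cod C u) Z \<and> Comp C h u = Comp C h v \<longrightarrow>
        (\<exists>!k. hom C k (Cod C e) Z \<and> Comp C k e = h))"

definition regular_epi :: "('o,'a) cat \<Rightarrow> 'a \<Rightarrow> bool" where
  "regular_epi C e \<longleftrightarrow> (\<exists>u v. coequalizer C u v e)"

definition pullback :: "('o,'a) cat \<Rightarrow> 'a \<Rightarrow> 'a \<Rightarrow> 'a \<Rightarrow> 'a \<Rightarrow> bool" where
  "pullback C f g p q \<longleftrightarrow>
     f \<in> Arr C \<and> g \<in> Arr C \<and> Cod C f = Cod C g \<and>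
     hom C p (Dom C p) (Dom C f) \<and> hom C q (Dom C p) (Dom C g) \<and>
     Comp C f p = Comp C g q \<and>
     (\<forall>a b W. hom C a W (Dom C f) \<and> hom C b W (Dom C g) \<and> Comp C f a = Comp C g b \<longrightarrow>
        (\<exists>!h. hom C h W (Dom C p) \<and> Comp C p h = a \<and> Comp C q h = b))"

definition product :: "('o,'a) cat \<Rightarrow> 'o \<Rightarrow> 'o \<Rightarrow> 'o \<Rightarrow> 'a \<Rightarrow> 'a \<Rightarrow> bool" where
  "product C X Y P p1 p2 \<longleftrightarrow> hom C p1 P X \<and> hom C p2 P Y \<and>
     (\<forall>a b W. hom C a W X \<and> hom C b W Y \<longrightarrow>
        (\<exists>!h. hom C h W P \<and> Comp C p1 h = a \<and> Comp C p2 h = b))"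

definition terminal :: "('o,'a) cat \<Rightarrow> 'o \<Rightarrow> bool" where
  "terminal C T \<longleftrightarrow> T \<in> Obj C \<and> (\<forall>X \<in> Obj C. \<exists>!h. hom C h X T)"

definition finitely_complete :: "('o,'a) cat \<Rightarrow> bool" where
  "finitely_complete C \<longleftrightarrow> (\<exists>T. terminal C T) \<and>
     (\<forall>f g. f \<in> Arr C \<and> g \<in> Arr C \<and> Cod C f = Cod C g \<longrightarrow> (\<exists>p q. pullback C f g p q))"

definition regular_category :: "('o,'a) cat \<Rightarrow> bool" where
  "regular_category C \<longleftrightarrow> category C \<and> finitely_complete C \<and>
     (\<forall>h \<in> Arr C. \<exists>e m. regular_epi C e \<and> mono C m \<and> Cod C e = Dom C m \<and> Comp C m e = h) \<and>
     (\<forall>f g p q. pullback C f g p q \<and> regular_epi C f \<longrightarrow> regular_epi C q)"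

text \<open>Pulling back the split epimorphism (f,s) : X \<rightleftarrows> Y along g : Y' \<rightarrow> Y,
  with pullback P, p1 : P \<rightarrow> Y', p2 : P \<rightarrow> X, g p1 = f p2, gives (p1, s')
  where s' = (1, s g).\<close>
definition fibrational :: "('o,'a) cat \<Rightarrow> ('a \<times> 'a) set \<Rightarrow> bool" where
  "fibrational C \<Sigma> \<longleftrightarrow>
     (\<forall>(f,s) \<in> \<Sigma>. split_epi C f s) \<and>
     (\<forall>f s. split_epi C f s \<and> iso C f \<longrightarrow> (f,s) \<in> \<Sigma>) \<and>
     (\<forall>f s g p1 p2 s'. (f,s) \<in> \<Sigma> \<and> pullback C g f p1 p2 \<and>
        hom C s' (Dom C g) (Dom C p1) \<and> Comp C p1 s' = Id C (Dom C g) \<and>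
        Comp C p2 s' = Comp C s g \<longrightarrow> (p1, s') \<in> \<Sigma>)"

definition jointly_extremally_epic :: "('o,'a) cat \<Rightarrow> 'a \<Rightarrow> 'a \<Rightarrow> bool" where
  "jointly_extremally_epic C a b \<longleftrightarrow> a \<in> Arr C \<and> b \<in> Arr C \<and> Cod C a = Cod C b \<and>
     (\<forall>m a' b'. mono C m \<and> Cod C m = Cod C a \<and>
        hom C a' (Dom C a) (Dom C m) \<and> hom C b' (Dom C b) (Dom C m) \<and>
        Comp C m a' = a \<and> Comp C m b' = b \<longrightarrow> iso C m)"

definition sigma_maltsev :: "('o,'a) cat \<Rightarrow> ('a \<times> 'a) set \<Rightarrow> bool" where
  "sigma_maltsev C \<Sigma> \<longleftrightarrow>
     (\<forall>f s g t p1 p2 s' tb. (f,s) \<in> \<Sigma> \<and> split_epi C g t \<and> Cod C g = Cod C f \<and>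
        pullback C g f p1 p2 \<and>
        hom C s' (Dom C g) (Dom C p1) \<and> Comp C p1 s' = Id C (Dom C g) \<and> Comp C p2 s' = Comp C s g \<and>
        hom C tb (Dom C f) (Dom C p1) \<and> Comp C p1 tb = Comp C t f \<and> Comp C p2 tb = Id C (Dom C f)
        \<longrightarrow> jointly_extremally_epic C s' tb)"

definition relation :: "('o,'a) cat \<Rightarrow> 'o \<Rightarrow> 'o \<Rightarrow> 'a \<Rightarrow> 'a \<Rightarrow> bool" where
  "relation C X S d0 d1 \<longleftrightarrow> hom C d0 S X \<and> hom C d1 S X \<and>
     (\<forall>P p1 p2 h. product C X X P p1 p2 \<and> hom C h S P \<and> Comp C p1 h = d0 \<and> Comp C p2 h = d1
        \<longrightarrow> mono C h)"

definition reflexive_with :: "('o,'a) cat \<Rightarrow> 'o \<Rightarrow> 'o \<Rightarrow> 'a \<Rightarrow> 'a \<Rightarrow> 'a \<Rightarrow> bool" where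
  "reflexive_with C X S d0 d1 s0 \<longleftrightarrow> hom C s0 X S \<and> Comp C d0 s0 = Id C X \<and> Comp C d1 s0 = Id C X"

definition reflexive_rel :: "('o,'a) cat \<Rightarrow> 'o \<Rightarrow> 'o \<Rightarrow> 'a \<Rightarrow> 'a \<Rightarrow> bool" where
  "reflexive_rel C X S d0 d1 \<longleftrightarrow> (\<exists>s0. reflexive_with C X S d0 d1 s0)"

definition symmetric_rel :: "('o,'a) cat \<Rightarrow> 'o \<Rightarrow> 'o \<Rightarrow> 'a \<Rightarrow> 'a \<Rightarrow> bool" where
  "symmetric_rel C X S d0 d1 \<longleftrightarrow>
     (\<exists>\<sigma>. hom C \<sigma> S S \<and> Comp C d0 \<sigma> = d1 \<and> Comp C d1 \<sigma> = d0)"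

text \<open>Transitivity: for the pullback P of d1 and d0 (pairs of composable related pairs),
  there is t : P \<rightarrow> S with d0 t = d0 p and d1 t = d1 q.\<close>
definition transitive_rel :: "('o,'a) cat \<Rightarrow> 'o \<Rightarrow> 'o \<Rightarrow> 'a \<Rightarrow> 'a \<Rightarrow> bool" where
  "transitive_rel C X S d0 d1 \<longleftrightarrow>
     (\<forall>p q. pullback C d1 d0 p q \<longrightarrow>
        (\<exists>t. hom C t (Dom C p) S \<and> Comp C d0 t = Comp C d0 p \<and> Comp C d1 t = Comp C d1 q))"

definition equivalence_rel :: "('o,'a) cat \<Rightarrow> 'o \<Rightarrow> 'o \<Rightarrow> 'a \<Rightarrow> 'a \<Rightarrow> bool" where
  "equivalence_rel C X S d0 d1 \<longleftrightarrow> relation C X S d0 d1 \<and> reflexive_rel C X S d0 d1 \<and>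
     symmetric_rel C X S d0 d1 \<and> transitive_rel C X S d0 d1"

definition sigma_relation :: "('o,'a) cat \<Rightarrow> ('a \<times> 'a) set \<Rightarrow> 'o \<Rightarrow> 'o \<Rightarrow> 'a \<Rightarrow> 'a \<Rightarrow> 'a \<Rightarrow> bool" where
  "sigma_relation C \<Sigma> X S d0 d1 s0 \<longleftrightarrow> relation C X S d0 d1 \<and> reflexive_with C X S d0 d1 s0 \<and>
     (d0, s0) \<in> \<Sigma>"

definition sigma_equivalence_relation :: "('o,'a) cat \<Rightarrow> ('a \<times> 'a) set \<Rightarrow> 'o \<Rightarrow> 'o \<Rightarrow> 'a \<Rightarrow> 'a \<Rightarrow> 'a \<Rightarrow> bool" where
  "sigma_equivalence_relation C \<Sigma> X S d0 d1 s0 \<longleftrightarrow>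
     equivalence_rel C X S d0 d1 \<and> sigma_relation C \<Sigma> X S d0 d1 s0"

text \<open>Direct image data: (P,\<pi>1,\<pi>2) a product Y \<times> Y, and S --e--> I --m--> Y \<times> Y the
  (regular epi, mono) factorization of (f \<times> f) \<circ> (d0,d1) = (f d0, f d1).
  The direct image f(S) is the relation (I, \<pi>1 m, \<pi>2 m) on Y.\<close>
definition direct_image_data :: "('o,'a) cat \<Rightarrow> 'a \<Rightarrow> 'o \<Rightarrow> 'o \<Rightarrow> 'a \<Rightarrow> 'a \<Rightarrow>
    'o \<Rightarrow> 'a \<Rightarrow> 'a \<Rightarrow> 'o \<Rightarrow> 'a \<Rightarrow> 'a \<Rightarrow> bool" where
  "direct_image_data C f Y S d0 d1 P \<pi>1 \<pi>2 I e m \<longleftrightarrow>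
     product C Y Y P \<pi>1 \<pi>2 \<and> hom C e S I \<and> regular_epi C e \<and> hom C m I P \<and> mono C m \<and>
     Comp C \<pi>1 (Comp C m e) = Comp C f d0 \<and> Comp C \<pi>2 (Comp C m e) = Comp C f d1"

end

theory Submission
  imports Defs
begin

text \<open>
  A composable pair of elements of f(S) is covered, through the regular epimorphism
  S \<rightarrow> f(S), by a pair (s1, s2) in S with f d1 s1 = f d0 s2. Such pairs are the
  elements (s1, x, s2) of X' = Y' \<times>_X S, where Y' = S \<times>_Y X and d0 s2 = x; we must show
  that \<Phi>(s1, x, s2) = (f d0 s1, f d1 s2) lies in f(S). On the two canonical sections
  (s, x) \<mapsto> (s, x, s0 x) and s \<mapsto> (s0 d0 s, d0 s, s) of the \<Sigma>-Mal'tsev condition for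
  (d0, s0) this is clear, as \<Phi> takes the values (f d0 s, f d1 s) there; since the sections
  are jointly extremally epic, \<Phi> factors through the monomorphism f(S) \<rightarrowtail> Y \<times> Y.
  Reflexivity and symmetry pass to f(S) by the orthogonality of the regular epimorphisms
  f and S \<rightarrow> f(S) to that monomorphism.
\<close>

lemma ex1_uniqueness: "\<exists>!x. P x \<Longrightarrow> P a \<Longrightarrow> P b \<Longrightarrow> a = b"
  by blast

locale category_context =
  fixes C :: "('o,'a) cat"
  assumes category: "category C"
begin

abbreviation cmp (infixr "\<cdot>" 55) where "g \<cdot> f \<equiv> Comp C g f"

lemma arr_comp [simp]: "f \<in> Arr C \<Longrightarrow> g \<in> Arr C \<Longrightarrow> Cod C f = Dom C g \<Longrightarrow> g \<cdot> f \<in> Arr C"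
  using category unfolding category_def hom_def by blast

lemma dom_comp [simp]: "f \<in> Arr C \<Longrightarrow> g \<in> Arr C \<Longrightarrow> Cod C f = Dom C g \<Longrightarrow> Dom C (g \<cdot> f) = Dom C f"
  using category unfolding category_def hom_def by blast

lemma cod_comp [simp]: "f \<in> Arr C \<Longrightarrow> g \<in> Arr C \<Longrightarrow> Cod C f = Dom C g \<Longrightarrow> Cod C (g \<cdot> f) = Cod C g"
  using category unfolding category_def hom_def by blast

lemma comp_assoc [simp]:
  "f \<in> Arr C \<Longrightarrow> g \<in> Arr C \<Longrightarrow> h \<in> Arr C \<Longrightarrow> Cod C f = Dom C g \<Longrightarrow> Cod C g = Dom C h \<Longrightarrow>
    (h \<cdot> g) \<cdot> f = h \<cdot> (g \<cdot> f)"
  using category unfolding category_def by (elim conjE) (rule sym, blast)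

lemma comp_id_left [simp]: "f \<in> Arr C \<Longrightarrow> Cod C f = B \<Longrightarrow> Id C B \<cdot> f = f"
  using category unfolding category_def by blast

lemma comp_id_right [simp]: "f \<in> Arr C \<Longrightarrow> Dom C f = A \<Longrightarrow> f \<cdot> Id C A = f"
  using category unfolding category_def by blast

lemma hom_id: "A \<in> Obj C \<Longrightarrow> hom C (Id C A) A A"
  using category unfolding category_def by blast

lemma hom_id_dom: "hom C f A B \<Longrightarrow> hom C (Id C A) A A"
  using category hom_id unfolding category_def hom_def by blast

lemma hom_id_cod: "hom C f A B \<Longrightarrow> hom C (Id C B) B B"
  using category hom_id unfolding category_def hom_def by blast

lemma hom_comp: "hom C f A B \<Longrightarrow> hom C g B D \<Longrightarrow> hom C (g \<cdot> f) A D"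
  unfolding hom_def by simp

lemma comp_eq_extend:
  assumes "g \<cdot> f = h" "hom C f A B" "hom C g B D" "hom C x W A"
  shows "g \<cdot> (f \<cdot> x) = h \<cdot> x"
proof -
  have "(g \<cdot> f) \<cdot> x = g \<cdot> (f \<cdot> x)"
    using assms(2-4) unfolding hom_def by simp
  then show ?thesis using assms(1) by simp
qed

lemma comp_square_extend:
  assumes "g \<cdot> f = k \<cdot> h" "hom C f A B" "hom C g B D" "hom C h A B'" "hom C k B' D"
    and "hom C x W A"
  shows "g \<cdot> (f \<cdot> x) = k \<cdot> (h \<cdot> x)"
  using comp_eq_extend[OF assms(1-3,6)] comp_eq_extend[OF refl assms(4,5,6)] by simp

lemma product_arr_eqI:
  assumes "product C X Y P p1 p2" "hom C a W P" "hom C b W P"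
    and "p1 \<cdot> a = p1 \<cdot> b" "p2 \<cdot> a = p2 \<cdot> b"
  shows "a = b"
proof -
  have "hom C (p1 \<cdot> a) W X" "hom C (p2 \<cdot> a) W Y"
    using assms(1,2) hom_comp unfolding product_def by blast+
  then have "\<exists>!h. hom C h W P \<and> p1 \<cdot> h = p1 \<cdot> a \<and> p2 \<cdot> h = p2 \<cdot> a"
    using assms(1) unfolding product_def by blast
  then show ?thesis by (rule ex1_uniqueness) (use assms(2-5) in auto)
qed

lemma product_pairing:
  assumes "product C X Y P p1 p2" "hom C a W X" "hom C b W Y"
  obtains h where "hom C h W P" "p1 \<cdot> h = a" "p2 \<cdot> h = b"
  using assms unfolding product_def by blast

lemma pullback_square:
  assumes "pullback C f g p q"
  shows "hom C p (Dom C p) (Dom C f)" "hom C q (Dom C p) (Dom C g)" "f \<cdot> p = g \<cdot> q"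
  using assms unfolding pullback_def by auto

lemma pullback_pairing:
  assumes "pullback C f g p q" "hom C a W (Dom C f)" "hom C b W (Dom C g)" "f \<cdot> a = g \<cdot> b"
  obtains h where "hom C h W (Dom C p)" "p \<cdot> h = a" "q \<cdot> h = b"
  using assms unfolding pullback_def by blast

lemma pullback_arr_eqI:
  assumes pb: "pullback C f g p q" and "hom C h W (Dom C p)" "hom C h' W (Dom C p)"
    and "p \<cdot> h = p \<cdot> h'" "q \<cdot> h = q \<cdot> h'"
  shows "h = h'"
proof -
  have sq: "hom C p (Dom C p) (Dom C f)" "hom C q (Dom C p) (Dom C g)" "f \<cdot> p = g \<cdot> q"
    using pullback_square[OF pb] .
  have "f \<cdot> (p \<cdot> h) = g \<cdot> (q \<cdot> h)"
    using comp_eq_extend[OF sq(3) sq(1) _ assms(2)] sq(2) assms(2) pb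
    unfolding pullback_def hom_def by auto
  moreover have "hom C (p \<cdot> h) W (Dom C f)" "hom C (q \<cdot> h) W (Dom C g)"
    using pullback_square[OF pb] assms(2) hom_comp by blast+
  ultimately have "\<exists>!k. hom C k W (Dom C p) \<and> p \<cdot> k = p \<cdot> h \<and> q \<cdot> k = q \<cdot> h"
    using pb unfolding pullback_def by blast
  then show ?thesis by (rule ex1_uniqueness) (use assms(2-5) in auto)
qed

lemma mono_cancel:
  assumes "mono C m" "hom C x W (Dom C m)" "hom C y W (Dom C m)" "m \<cdot> x = m \<cdot> y"
  shows "x = y"
proof -
  have "x \<in> Arr C \<and> y \<in> Arr C \<and> Cod C x = Dom C m \<and> Cod C y = Dom C m \<and>
      Dom C x = Dom C y \<and> m \<cdot> x = m \<cdot> y"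
    using assms(2-4) unfolding hom_def by simp
  then show ?thesis
    using assms(1) unfolding mono_def by blast
qed

lemma mono_hom: "mono C m \<Longrightarrow> hom C m (Dom C m) (Cod C m)"
  unfolding mono_def hom_def by blast

lemma regular_epi_mono_diagonal:
  assumes re: "regular_epi C e" and mo: "mono C m"
    and a: "hom C a (Dom C e) (Dom C m)" and b: "hom C b (Cod C e) (Cod C m)"
    and sq: "m \<cdot> a = b \<cdot> e"
  obtains k where "hom C k (Cod C e) (Dom C m)" "m \<cdot> k = b"
proof -
  obtain u v where co: "coequalizer C u v e"
    using re unfolding regular_epi_def by blast
  then have "u \<in> Arr C \<and> v \<in> Arr C \<and> e \<in> Arr C \<and> Dom C u = Dom C v \<and> Cod C u = Cod C v \<and>
      Dom C e = Cod C u \<and> e \<cdot> u = e \<cdot> v"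
    unfolding coequalizer_def by (elim conjE) (intro conjI; assumption)
  then have u: "hom C u (Dom C u) (Dom C e)" "hom C v (Dom C u) (Dom C e)" "e \<cdot> u = e \<cdot> v"
    and e: "hom C e (Dom C e) (Cod C e)"
    unfolding hom_def by simp_all
  have m: "hom C m (Dom C m) (Cod C m)"
    using mono_hom[OF mo] .
  have "m \<cdot> (a \<cdot> u) = m \<cdot> (a \<cdot> v)"
    using comp_square_extend[OF sq a m e b u(1)] comp_square_extend[OF sq a m e b u(2)] u(3)
    by simp
  then have auv: "a \<cdot> u = a \<cdot> v"
    using mono_cancel[OF mo] hom_comp[OF u(1) a] hom_comp[OF u(2) a] by blast
  have "hom C a (Cod C u) (Dom C m)"
    using a u(1) unfolding hom_def by simp
  then obtain k where k: "hom C k (Cod C e) (Dom C m)" "k \<cdot> e = a"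
    using co auv unfolding coequalizer_def by blast
  have "hom C (b \<cdot> e) (Cod C u) (Cod C m)" "(b \<cdot> e) \<cdot> u = (b \<cdot> e) \<cdot> v"
    using b e u unfolding hom_def by simp_all
  then have "\<exists>!h. hom C h (Cod C e) (Cod C m) \<and> h \<cdot> e = b \<cdot> e"
    using co unfolding coequalizer_def by blast
  moreover have "hom C (m \<cdot> k) (Cod C e) (Cod C m) \<and> (m \<cdot> k) \<cdot> e = b \<cdot> e"
    using k m e sq unfolding hom_def by simp
  ultimately have "m \<cdot> k = b"
    using b ex1_uniqueness by blast
  with k that show ?thesis by blast
qed

lemma mono_pullback:
  assumes pb: "pullback C g m p q" and mo: "mono C m"
  shows "mono C p"
  unfolding mono_def
proof (intro conjI allI impI)
  have sq: "hom C p (Dom C p) (Dom C g)" "hom C q (Dom C p) (Dom C m)" "g \<cdot> p = m \<cdot> q"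
    and g: "hom C g (Dom C g) (Cod C m)" and m: "hom C m (Dom C m) (Cod C m)"
    using pb unfolding pullback_def hom_def by auto
  show "p \<in> Arr C" using sq unfolding hom_def by blast
  fix x y
  assume xy: "x \<in> Arr C \<and> y \<in> Arr C \<and> Cod C x = Dom C p \<and> Cod C y = Dom C p \<and>
    Dom C x = Dom C y \<and> p \<cdot> x = p \<cdot> y"
  then have x: "hom C x (Dom C x) (Dom C p)" and y: "hom C y (Dom C x) (Dom C p)"
    unfolding hom_def by auto
  have "m \<cdot> (q \<cdot> x) = m \<cdot> (q \<cdot> y)"
    using comp_square_extend[OF sq(3) sq(1) g sq(2) m x]
      comp_square_extend[OF sq(3) sq(1) g sq(2) m y] xy
    unfolding hom_def by auto
  then have "q \<cdot> x = q \<cdot> y"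
    using mono_cancel[OF mo] hom_comp[OF x sq(2)] hom_comp[OF y sq(2)] by blast
  then show "x = y"
    using pullback_arr_eqI[OF pb x y] xy by blast
qed

lemma iso_right_inverse:
  assumes "iso C f"
  obtains g where "hom C g (Cod C f) (Dom C f)" "f \<cdot> g = Id C (Cod C f)"
  using assms unfolding iso_def by blast

lemma relation_of_mono_into_product:
  assumes prod: "product C Y Y P \<pi>1 \<pi>2" and m: "hom C m I P" "mono C m"
  shows "relation C Y I (\<pi>1 \<cdot> m) (\<pi>2 \<cdot> m)"
  unfolding relation_def
proof (intro conjI allI impI)
  have \<pi>: "hom C \<pi>1 P Y" "hom C \<pi>2 P Y"
    using prod unfolding product_def by auto
  then show "hom C (\<pi>1 \<cdot> m) I Y" "hom C (\<pi>2 \<cdot> m) I Y"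
    using m(1) hom_comp by blast+
  fix P' \<rho>1 \<rho>2 h
  assume "product C Y Y P' \<rho>1 \<rho>2 \<and> hom C h I P' \<and> \<rho>1 \<cdot> h = \<pi>1 \<cdot> m \<and> \<rho>2 \<cdot> h = \<pi>2 \<cdot> m"
  then have h: "hom C h I P'" "\<rho>1 \<cdot> h = \<pi>1 \<cdot> m" "\<rho>2 \<cdot> h = \<pi>2 \<cdot> m"
    and \<rho>: "hom C \<rho>1 P' Y" "hom C \<rho>2 P' Y"
    unfolding product_def by auto
  show "mono C h"
    unfolding mono_def
  proof (intro conjI allI impI)
    show "h \<in> Arr C" using h unfolding hom_def by blast
    fix x y
    assume xy: "x \<in> Arr C \<and> y \<in> Arr C \<and> Cod C x = Dom C h \<and> Cod C y = Dom C h \<and>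
      Dom C x = Dom C y \<and> h \<cdot> x = h \<cdot> y"
    then have x: "hom C x (Dom C x) I" and y: "hom C y (Dom C x) I"
      using h unfolding hom_def by auto
    have "\<pi>1 \<cdot> (m \<cdot> x) = \<rho>1 \<cdot> (h \<cdot> x)" "\<pi>1 \<cdot> (m \<cdot> y) = \<rho>1 \<cdot> (h \<cdot> y)"
      "\<pi>2 \<cdot> (m \<cdot> x) = \<rho>2 \<cdot> (h \<cdot> x)" "\<pi>2 \<cdot> (m \<cdot> y) = \<rho>2 \<cdot> (h \<cdot> y)"
      using comp_square_extend[OF h(2)[symmetric] m(1) \<pi>(1) h(1) \<rho>(1)]
        comp_square_extend[OF h(3)[symmetric] m(1) \<pi>(2) h(1) \<rho>(2)] x y by blast+
    then have "\<pi>1 \<cdot> (m \<cdot> x) = \<pi>1 \<cdot> (m \<cdot> y)" "\<pi>2 \<cdot> (m \<cdot> x) = \<pi>2 \<cdot> (m \<cdot> y)"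
      using xy by simp_all
    then have "m \<cdot> x = m \<cdot> y"
      using product_arr_eqI[OF prod] hom_comp[OF x m(1)] hom_comp[OF y m(1)] by blast
    then show "x = y"
      using mono_cancel[OF m(2)] x y m(1) unfolding hom_def by auto
  qed
qed

lemma sigma_maltsev_sections:
  assumes mal: "sigma_maltsev C \<Sigma>" and \<Sigma>: "(f, s) \<in> \<Sigma>" and fs: "split_epi C f s"
    and gt: "split_epi C g t" and cod: "Cod C g = Cod C f" and pb: "pullback C g f p1 p2"
  obtains s' t' where "hom C s' (Dom C g) (Dom C p1)" "p1 \<cdot> s' = Id C (Dom C g)" "p2 \<cdot> s' = s \<cdot> g"
    and "hom C t' (Dom C f) (Dom C p1)" "p1 \<cdot> t' = t \<cdot> f" "p2 \<cdot> t' = Id C (Dom C f)"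
    and "jointly_extremally_epic C s' t'"
proof -
  have f: "hom C f (Dom C f) (Cod C f)" and s: "hom C s (Cod C f) (Dom C f)"
    and fs_id: "f \<cdot> s = Id C (Cod C f)"
    and g: "hom C g (Dom C g) (Cod C f)" and t: "hom C t (Cod C f) (Dom C g)"
    and gt_id: "g \<cdot> t = Id C (Cod C f)"
    using fs gt cod unfolding split_epi_def hom_def by auto
  have "g \<cdot> Id C (Dom C g) = f \<cdot> (s \<cdot> g)"
    using comp_eq_extend[OF fs_id s f g] g unfolding hom_def by simp
  then obtain s' where s': "hom C s' (Dom C g) (Dom C p1)"
    "p1 \<cdot> s' = Id C (Dom C g)" "p2 \<cdot> s' = s \<cdot> g"
    using pullback_pairing[OF pb hom_id_dom[OF g] hom_comp[OF g s]] by blast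
  have "g \<cdot> (t \<cdot> f) = f \<cdot> Id C (Dom C f)"
    using comp_eq_extend[OF gt_id t g f] f unfolding hom_def by simp
  then obtain t' where t': "hom C t' (Dom C f) (Dom C p1)"
    "p1 \<cdot> t' = t \<cdot> f" "p2 \<cdot> t' = Id C (Dom C f)"
    using pullback_pairing[OF pb hom_comp[OF f t] hom_id_dom[OF f]] by blast
  have "jointly_extremally_epic C s' t'"
    using mal \<Sigma> gt cod pb s' t' unfolding sigma_maltsev_def by blast
  with s' t' that show ?thesis by blast
qed

end

locale regular_category_context =
  fixes C :: "('o,'a) cat"
  assumes regular: "regular_category C"

sublocale regular_category_context \<subseteq> category_context
  using regular unfolding regular_category_def by unfold_locales blast

context regular_category_context
begin

lemma pullback_exists:
  assumes "hom C f A Z" "hom C g B Z"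
  obtains p q where "pullback C f g p q"
  using assms regular unfolding regular_category_def finitely_complete_def hom_def by metis

lemma regular_epi_pullback:
  assumes "pullback C f g p q" "regular_epi C f"
  shows "regular_epi C q"
  using assms regular unfolding regular_category_def by blast

lemma factor_through_mono_of_jointly_extremally_epic:
  assumes jee: "jointly_extremally_epic C s t" and mo: "mono C m"
    and \<Phi>: "hom C \<Phi> (Cod C s) (Cod C m)"
    and a: "hom C a (Dom C s) (Dom C m)" "\<Phi> \<cdot> s = m \<cdot> a"
    and b: "hom C b (Dom C t) (Dom C m)" "\<Phi> \<cdot> t = m \<cdot> b"
  obtains \<phi> where "hom C \<phi> (Cod C s) (Dom C m)" "m \<cdot> \<phi> = \<Phi>"
proof -
  have m: "hom C m (Dom C m) (Cod C m)"
    using mono_hom[OF mo] .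
  have s: "hom C s (Dom C s) (Cod C s)" and t: "hom C t (Dom C t) (Cod C s)"
    using jee unfolding jointly_extremally_epic_def hom_def by auto
  obtain \<mu> \<nu> where pb: "pullback C \<Phi> m \<mu> \<nu>"
    using pullback_exists[OF \<Phi> m] .
  have \<mu>: "hom C \<mu> (Dom C \<mu>) (Cod C s)" "mono C \<mu>"
    and \<nu>: "hom C \<nu> (Dom C \<mu>) (Dom C m)" and sq: "\<Phi> \<cdot> \<mu> = m \<cdot> \<nu>"
    using pullback_square[OF pb] mono_pullback[OF pb mo] \<Phi> unfolding hom_def by auto
  have "hom C s (Dom C s) (Dom C \<Phi>)" "hom C t (Dom C t) (Dom C \<Phi>)"
    using s t \<Phi> unfolding hom_def by auto
  then obtain s1 t1 where s1: "hom C s1 (Dom C s) (Dom C \<mu>)" "\<mu> \<cdot> s1 = s"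
    and t1: "hom C t1 (Dom C t) (Dom C \<mu>)" "\<mu> \<cdot> t1 = t"
    using pullback_pairing[OF pb _ a] pullback_pairing[OF pb _ b] by metis
  have "iso C \<mu>"
    using jee \<mu> s1 t1 unfolding jointly_extremally_epic_def hom_def by blast
  then obtain \<mu>' where \<mu>': "hom C \<mu>' (Cod C s) (Dom C \<mu>)" "\<mu> \<cdot> \<mu>' = Id C (Cod C s)"
    using iso_right_inverse \<mu>(1) unfolding hom_def by metis
  have "m \<cdot> (\<nu> \<cdot> \<mu>') = \<Phi>"
    using comp_square_extend[OF sq[symmetric] \<nu> m \<mu>(1) \<Phi> \<mu>'(1)] \<mu>'(2) \<Phi>
    unfolding hom_def by simp
  with hom_comp[OF \<mu>'(1) \<nu>] that show ?thesis by blast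
qed

lemma regular_epi_cover_lift:
  assumes "regular_epi C e" "hom C e A B" "hom C a Q B"
  obtains v \<epsilon> where "regular_epi C \<epsilon>" "hom C \<epsilon> (Dom C \<epsilon>) Q" "hom C v (Dom C \<epsilon>) A"
    "e \<cdot> v = a \<cdot> \<epsilon>"
proof -
  obtain v \<epsilon> where pb: "pullback C e a v \<epsilon>"
    using pullback_exists assms(2,3) .
  then have "regular_epi C \<epsilon>"
    using regular_epi_pullback assms(1) by blast
  moreover have "hom C \<epsilon> (Dom C \<epsilon>) Q" "hom C v (Dom C \<epsilon>) A" "e \<cdot> v = a \<cdot> \<epsilon>"
    using pullback_square[OF pb] assms(2,3) unfolding hom_def by auto
  ultimately show ?thesis using that by blast
qed

end

locale direct_image = regular_category_context +
  fixes f X Y S d0 d1 P \<pi>1 \<pi>2 I e m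
  assumes f: "hom C f X Y" and d0: "hom C d0 S X" and d1: "hom C d1 S X"
    and image: "direct_image_data C f Y S d0 d1 P \<pi>1 \<pi>2 I e m"
begin

lemma product: "product C Y Y P \<pi>1 \<pi>2"
  and e: "hom C e S I" and e_regular: "regular_epi C e"
  and m: "hom C m I P" and m_mono: "mono C m"
  using image unfolding direct_image_data_def by simp_all

lemma \<pi>1: "hom C \<pi>1 P Y" and \<pi>2: "hom C \<pi>2 P Y"
  using product unfolding product_def by simp_all

lemma image_fst: "hom C x W S \<Longrightarrow> \<pi>1 \<cdot> (m \<cdot> (e \<cdot> x)) = f \<cdot> (d0 \<cdot> x)"
  using comp_square_extend[OF _ e hom_comp[OF m \<pi>1] d0 f] image m \<pi>1 e
  unfolding direct_image_data_def hom_def by simp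

lemma image_snd: "hom C x W S \<Longrightarrow> \<pi>2 \<cdot> (m \<cdot> (e \<cdot> x)) = f \<cdot> (d1 \<cdot> x)"
  using comp_square_extend[OF _ e hom_comp[OF m \<pi>2] d1 f] image m \<pi>2 e
  unfolding direct_image_data_def hom_def by simp

lemma relation_image: "relation C Y I (\<pi>1 \<cdot> m) (\<pi>2 \<cdot> m)"
  using relation_of_mono_into_product[OF product m m_mono] .

lemma reflexive_image:
  assumes f_regular: "regular_epi C f" and s0: "reflexive_with C X S d0 d1 s0"
  shows "reflexive_rel C Y I (\<pi>1 \<cdot> m) (\<pi>2 \<cdot> m)"
proof -
  have s0: "hom C s0 X S" "d0 \<cdot> s0 = Id C X" "d1 \<cdot> s0 = Id C X"
    using s0 unfolding reflexive_with_def by simp_all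
  have idY: "hom C (Id C Y) Y Y"
    using hom_id_cod[OF \<pi>1] .
  obtain \<delta> where \<delta>: "hom C \<delta> Y P" "\<pi>1 \<cdot> \<delta> = Id C Y" "\<pi>2 \<cdot> \<delta> = Id C Y"
    using product_pairing[OF product idY idY] .
  have "\<pi>1 \<cdot> (m \<cdot> (e \<cdot> s0)) = \<pi>1 \<cdot> (\<delta> \<cdot> f)" "\<pi>2 \<cdot> (m \<cdot> (e \<cdot> s0)) = \<pi>2 \<cdot> (\<delta> \<cdot> f)"
    using image_fst[OF s0(1)] image_snd[OF s0(1)] s0 comp_eq_extend[OF \<delta>(2) \<delta>(1) \<pi>1 f]
      comp_eq_extend[OF \<delta>(3) \<delta>(1) \<pi>2 f] f
    unfolding hom_def by simp_all
  then have "m \<cdot> (e \<cdot> s0) = \<delta> \<cdot> f"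
    using product_arr_eqI[OF product] hom_comp[OF hom_comp[OF s0(1) e] m] hom_comp[OF f \<delta>(1)]
    by blast
  then obtain w where w: "hom C w Y I" "m \<cdot> w = \<delta>"
    using regular_epi_mono_diagonal[OF f_regular m_mono] hom_comp[OF s0(1) e] \<delta>(1) f m
    unfolding hom_def by auto
  have "(\<pi>1 \<cdot> m) \<cdot> w = Id C Y" "(\<pi>2 \<cdot> m) \<cdot> w = Id C Y"
    using w \<delta> \<pi>1 \<pi>2 m unfolding hom_def by simp_all
  then show ?thesis
    using w(1) unfolding reflexive_rel_def reflexive_with_def by blast
qed

lemma symmetric_image:
  assumes "symmetric_rel C X S d0 d1"
  shows "symmetric_rel C Y I (\<pi>1 \<cdot> m) (\<pi>2 \<cdot> m)"
proof -
  obtain \<sigma> where \<sigma>: "hom C \<sigma> S S" "d0 \<cdot> \<sigma> = d1" "d1 \<cdot> \<sigma> = d0"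
    using assms unfolding symmetric_rel_def by blast
  obtain \<tau> where \<tau>: "hom C \<tau> P P" "\<pi>1 \<cdot> \<tau> = \<pi>2" "\<pi>2 \<cdot> \<tau> = \<pi>1"
    using product_pairing[OF product \<pi>2 \<pi>1] .
  have "\<pi>1 \<cdot> (m \<cdot> (e \<cdot> \<sigma>)) = \<pi>1 \<cdot> (\<tau> \<cdot> (m \<cdot> e))" "\<pi>2 \<cdot> (m \<cdot> (e \<cdot> \<sigma>)) = \<pi>2 \<cdot> (\<tau> \<cdot> (m \<cdot> e))"
    using image_fst[OF \<sigma>(1)] image_snd[OF \<sigma>(1)] image_fst[OF hom_id_dom[OF \<sigma>(1)]]
      image_snd[OF hom_id_dom[OF \<sigma>(1)]] \<sigma> comp_eq_extend[OF \<tau>(2) \<tau>(1) \<pi>1 hom_comp[OF e m]]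
      comp_eq_extend[OF \<tau>(3) \<tau>(1) \<pi>2 hom_comp[OF e m]] e m d0 d1
    unfolding hom_def by simp_all
  then have "m \<cdot> (e \<cdot> \<sigma>) = (\<tau> \<cdot> m) \<cdot> e"
    using product_arr_eqI[OF product] hom_comp[OF hom_comp[OF \<sigma>(1) e] m]
      hom_comp[OF hom_comp[OF e m] \<tau>(1)] \<tau>(1) e m unfolding hom_def by auto
  then obtain k where k: "hom C k I I" "m \<cdot> k = \<tau> \<cdot> m"
    using regular_epi_mono_diagonal[OF e_regular m_mono] hom_comp[OF \<sigma>(1) e] hom_comp[OF m \<tau>(1)] e m
    unfolding hom_def by auto
  have "(\<pi>1 \<cdot> m) \<cdot> k = \<pi>2 \<cdot> m" "(\<pi>2 \<cdot> m) \<cdot> k = \<pi>1 \<cdot> m"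
    using comp_eq_extend[OF \<tau>(2) \<tau>(1) \<pi>1 m] comp_eq_extend[OF \<tau>(3) \<tau>(1) \<pi>2 m] k \<pi>1 \<pi>2 m
    unfolding hom_def by simp_all
  then show ?thesis
    using k(1) unfolding symmetric_rel_def by blast
qed

lemma composable_span_into_image:
  assumes mal: "sigma_maltsev C \<Sigma>" and \<Sigma>: "(d0, s0) \<in> \<Sigma>"
    and s0: "reflexive_with C X S d0 d1 s0"
  obtains a1 a2 p1 p2 \<phi> where "pullback C (f \<cdot> d1) f a1 a2" "pullback C a2 d0 p1 p2"
    "hom C \<phi> (Dom C p1) I" "\<pi>1 \<cdot> (m \<cdot> \<phi>) = f \<cdot> (d0 \<cdot> (a1 \<cdot> p1))" "\<pi>2 \<cdot> (m \<cdot> \<phi>) = f \<cdot> (d1 \<cdot> p2)"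
proof -
  have s0: "hom C s0 X S" "d0 \<cdot> s0 = Id C X" "d1 \<cdot> s0 = Id C X"
    using s0 unfolding reflexive_with_def by simp_all
  have d0_s0: "d0 \<cdot> (s0 \<cdot> x) = x" and d1_s0: "d1 \<cdot> (s0 \<cdot> x) = x" if "hom C x W X" for x W
    using comp_eq_extend[OF s0(2) s0(1) d0 that] comp_eq_extend[OF s0(3) s0(1) d1 that] that
    unfolding hom_def by simp_all
  obtain a1 a2 where pY: "pullback C (f \<cdot> d1) f a1 a2"
    using pullback_exists[OF hom_comp[OF d1 f] f] .
  define Y0 where "Y0 = Dom C a1"
  have a1: "hom C a1 Y0 S" and a2: "hom C a2 Y0 X" and sqY: "f \<cdot> (d1 \<cdot> a1) = f \<cdot> a2"
    using pullback_square[OF pY] d1 f unfolding Y0_def hom_def by auto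
  have "hom C s0 X (Dom C (f \<cdot> d1))" "hom C (Id C X) X (Dom C f)" "(f \<cdot> d1) \<cdot> s0 = f \<cdot> Id C X"
    using s0 hom_id_dom[OF f] d1 f unfolding hom_def by simp_all
  then obtain t where t: "hom C t X Y0" "a1 \<cdot> t = s0" "a2 \<cdot> t = Id C X"
    using pullback_pairing[OF pY] unfolding Y0_def by blast
  obtain p1 p2 where pX: "pullback C a2 d0 p1 p2"
    using pullback_exists[OF a2 d0] .
  define X0 where "X0 = Dom C p1"
  have p1: "hom C p1 X0 Y0" and p2: "hom C p2 X0 S"
    using pullback_square[OF pX] a2 d0 unfolding X0_def hom_def by auto
  have "split_epi C d0 s0" "split_epi C a2 t"
    using s0 d0 a2 t unfolding split_epi_def hom_def by auto
  then obtain s' t' where s': "hom C s' Y0 X0" "p1 \<cdot> s' = Id C Y0" "p2 \<cdot> s' = s0 \<cdot> a2"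
    and t': "hom C t' S X0" "p1 \<cdot> t' = t \<cdot> d0" "p2 \<cdot> t' = Id C S"
    and jee: "jointly_extremally_epic C s' t'"
    using sigma_maltsev_sections[OF mal \<Sigma> _ _ _ pX] a2 d0
    unfolding X0_def hom_def by auto
  obtain \<Phi> where \<Phi>: "hom C \<Phi> X0 P" "\<pi>1 \<cdot> \<Phi> = f \<cdot> (d0 \<cdot> (a1 \<cdot> p1))" "\<pi>2 \<cdot> \<Phi> = f \<cdot> (d1 \<cdot> p2)"
    using product_pairing[OF product] hom_comp[OF hom_comp[OF hom_comp[OF p1 a1] d0] f]
      hom_comp[OF hom_comp[OF p2 d1] f] by blast
  have \<Phi>_comp: "\<pi>1 \<cdot> (\<Phi> \<cdot> x) = f \<cdot> (d0 \<cdot> (a1 \<cdot> (p1 \<cdot> x)))" "\<pi>2 \<cdot> (\<Phi> \<cdot> x) = f \<cdot> (d1 \<cdot> (p2 \<cdot> x))"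
    if "hom C x W X0" for x W
    using comp_eq_extend[OF \<Phi>(2) \<Phi>(1) \<pi>1 that] comp_eq_extend[OF \<Phi>(3) \<Phi>(1) \<pi>2 that]
      that p1 p2 a1 d0 d1 f unfolding hom_def by simp_all
  have "\<pi>1 \<cdot> (\<Phi> \<cdot> s') = \<pi>1 \<cdot> (m \<cdot> (e \<cdot> a1))" "\<pi>2 \<cdot> (\<Phi> \<cdot> s') = \<pi>2 \<cdot> (m \<cdot> (e \<cdot> a1))"
    using \<Phi>_comp[OF s'(1)] s' image_fst[OF a1] image_snd[OF a1] d1_s0[OF a2] sqY a1
    unfolding hom_def by simp_all
  then have \<Phi>_s': "\<Phi> \<cdot> s' = m \<cdot> (e \<cdot> a1)"
    using product_arr_eqI[OF product hom_comp[OF s'(1) \<Phi>(1)] hom_comp[OF hom_comp[OF a1 e] m]]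
    by blast
  have "a1 \<cdot> (t \<cdot> d0) = s0 \<cdot> d0"
    using comp_eq_extend[OF t(2) t(1) a1 d0] .
  then have "\<pi>1 \<cdot> (\<Phi> \<cdot> t') = \<pi>1 \<cdot> (m \<cdot> e)" "\<pi>2 \<cdot> (\<Phi> \<cdot> t') = \<pi>2 \<cdot> (m \<cdot> e)"
    using \<Phi>_comp[OF t'(1)] t' d0_s0[OF d0] image_fst[OF hom_id_dom[OF e]]
      image_snd[OF hom_id_dom[OF e]] d0 d1 e unfolding hom_def by simp_all
  then have \<Phi>_t': "\<Phi> \<cdot> t' = m \<cdot> e"
    using product_arr_eqI[OF product hom_comp[OF t'(1) \<Phi>(1)] hom_comp[OF e m]] by blast
  obtain \<phi> where "hom C \<phi> X0 I" "m \<cdot> \<phi> = \<Phi>"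
    using factor_through_mono_of_jointly_extremally_epic[OF jee m_mono _ _ \<Phi>_s' _ \<Phi>_t']
      s' t' \<Phi>(1) m e a1 hom_comp[OF a1 e] unfolding hom_def by auto
  then show ?thesis
    using that[OF pY pX] \<Phi> unfolding X0_def by simp
qed

lemma image_relates_composable_pairs:
  assumes mal: "sigma_maltsev C \<Sigma>" and \<Sigma>: "(d0, s0) \<in> \<Sigma>"
    and s0: "reflexive_with C X S d0 d1 s0"
    and v1: "hom C v1 W S" and v2: "hom C v2 W S" and composable: "f \<cdot> (d1 \<cdot> v1) = f \<cdot> (d0 \<cdot> v2)"
  obtains k where "hom C k W I" "\<pi>1 \<cdot> (m \<cdot> k) = f \<cdot> (d0 \<cdot> v1)" "\<pi>2 \<cdot> (m \<cdot> k) = f \<cdot> (d1 \<cdot> v2)"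
proof -
  obtain a1 a2 p1 p2 \<phi> where pY: "pullback C (f \<cdot> d1) f a1 a2" and pX: "pullback C a2 d0 p1 p2"
    and \<phi>: "hom C \<phi> (Dom C p1) I"
      "\<pi>1 \<cdot> (m \<cdot> \<phi>) = f \<cdot> (d0 \<cdot> (a1 \<cdot> p1))" "\<pi>2 \<cdot> (m \<cdot> \<phi>) = f \<cdot> (d1 \<cdot> p2)"
    using composable_span_into_image[OF mal \<Sigma> s0] .
  have "hom C v1 W (Dom C (f \<cdot> d1))" "hom C (d0 \<cdot> v2) W (Dom C f)" "(f \<cdot> d1) \<cdot> v1 = f \<cdot> (d0 \<cdot> v2)"
    using v1 v2 d0 d1 f composable unfolding hom_def by simp_all
  then obtain y where y: "hom C y W (Dom C a1)" "a1 \<cdot> y = v1" "a2 \<cdot> y = d0 \<cdot> v2"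
    using pullback_pairing[OF pY] by blast
  moreover have "hom C y W (Dom C a2)" "hom C v2 W (Dom C d0)"
    using y(1) v2 d0 pullback_square[OF pY] unfolding hom_def by auto
  ultimately obtain z where z: "hom C z W (Dom C p1)" "p1 \<cdot> z = y" "p2 \<cdot> z = v2"
    using pullback_pairing[OF pX] by metis
  have "\<pi>1 \<cdot> (m \<cdot> (\<phi> \<cdot> z)) = f \<cdot> (d0 \<cdot> v1)" "\<pi>2 \<cdot> (m \<cdot> (\<phi> \<cdot> z)) = f \<cdot> (d1 \<cdot> v2)"
    using comp_square_extend[OF \<phi>(2)] comp_square_extend[OF \<phi>(3)] pullback_square[OF pX]
      pullback_square[OF pY] \<phi>(1) z y m \<pi>1 \<pi>2 d0 d1 f
    unfolding hom_def by simp_all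
  then show ?thesis
    using that hom_comp[OF z(1) \<phi>(1)] by blast
qed

lemma transitive_image:
  assumes mal: "sigma_maltsev C \<Sigma>" and \<Sigma>: "(d0, s0) \<in> \<Sigma>"
    and s0: "reflexive_with C X S d0 d1 s0"
  shows "transitive_rel C Y I (\<pi>1 \<cdot> m) (\<pi>2 \<cdot> m)"
  unfolding transitive_rel_def
proof (intro allI impI)
  fix p q
  assume pb: "pullback C (\<pi>2 \<cdot> m) (\<pi>1 \<cdot> m) p q"
  define Q where "Q = Dom C p"
  have p: "hom C p Q I" and q: "hom C q Q I" and sq: "\<pi>2 \<cdot> (m \<cdot> p) = \<pi>1 \<cdot> (m \<cdot> q)"
    using pullback_square[OF pb] \<pi>1 \<pi>2 m unfolding Q_def hom_def by auto
  obtain v1 \<epsilon>1 where \<epsilon>1: "regular_epi C \<epsilon>1" "hom C \<epsilon>1 (Dom C \<epsilon>1) Q"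
    and v1: "hom C v1 (Dom C \<epsilon>1) S" "e \<cdot> v1 = p \<cdot> \<epsilon>1"
    using regular_epi_cover_lift[OF e_regular e p] .
  obtain v2 \<epsilon>2 where \<epsilon>2: "regular_epi C \<epsilon>2" "hom C \<epsilon>2 (Dom C \<epsilon>2) (Dom C \<epsilon>1)"
    and v2: "hom C v2 (Dom C \<epsilon>2) S" "e \<cdot> v2 = (q \<cdot> \<epsilon>1) \<cdot> \<epsilon>2"
    using regular_epi_cover_lift[OF e_regular e hom_comp[OF \<epsilon>1(2) q]] by metis
  define w1 where "w1 = v1 \<cdot> \<epsilon>2"
  have w1: "hom C w1 (Dom C \<epsilon>2) S" "e \<cdot> w1 = p \<cdot> (\<epsilon>1 \<cdot> \<epsilon>2)"
    using hom_comp[OF \<epsilon>2(2) v1(1)] comp_square_extend[OF v1(2) v1(1) e \<epsilon>1(2) p \<epsilon>2(2)]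
    unfolding w1_def by simp_all
  have e_v2: "e \<cdot> v2 = q \<cdot> (\<epsilon>1 \<cdot> \<epsilon>2)"
    using v2(2) \<epsilon>1 \<epsilon>2 q unfolding hom_def by simp
  have \<epsilon>12: "hom C (\<epsilon>1 \<cdot> \<epsilon>2) (Dom C \<epsilon>2) Q"
    using hom_comp[OF \<epsilon>2(2) \<epsilon>1(2)] .
  have "f \<cdot> (d1 \<cdot> w1) = f \<cdot> (d0 \<cdot> v2)"
    using image_snd[OF w1(1)] image_fst[OF v2(1)] w1(2) e_v2
      comp_eq_extend[OF sq[symmetric]] \<epsilon>12 p q m \<pi>1 \<pi>2 unfolding hom_def by simp
  then obtain k where k: "hom C k (Dom C \<epsilon>2) I"
    "\<pi>1 \<cdot> (m \<cdot> k) = f \<cdot> (d0 \<cdot> w1)" "\<pi>2 \<cdot> (m \<cdot> k) = f \<cdot> (d1 \<cdot> v2)"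
    using image_relates_composable_pairs[OF mal \<Sigma> s0 w1(1) v2(1)] by blast
  obtain H where H: "hom C H Q P" "\<pi>1 \<cdot> H = \<pi>1 \<cdot> (m \<cdot> p)" "\<pi>2 \<cdot> H = \<pi>2 \<cdot> (m \<cdot> q)"
    using product_pairing[OF product hom_comp[OF hom_comp[OF p m] \<pi>1]
        hom_comp[OF hom_comp[OF q m] \<pi>2]] .
  have "\<pi>1 \<cdot> (m \<cdot> k) = \<pi>1 \<cdot> (H \<cdot> (\<epsilon>1 \<cdot> \<epsilon>2))" "\<pi>2 \<cdot> (m \<cdot> k) = \<pi>2 \<cdot> (H \<cdot> (\<epsilon>1 \<cdot> \<epsilon>2))"
    using k image_fst[OF w1(1)] image_snd[OF v2(1)] w1(2) e_v2 comp_eq_extend[OF H(2) H(1) \<pi>1 \<epsilon>12]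
      comp_eq_extend[OF H(3) H(1) \<pi>2 \<epsilon>12] \<epsilon>12 p q m \<pi>1 \<pi>2 unfolding hom_def by simp_all
  then have "m \<cdot> k = (H \<cdot> \<epsilon>1) \<cdot> \<epsilon>2"
    using product_arr_eqI[OF product hom_comp[OF k(1) m] hom_comp[OF \<epsilon>12 H(1)]] H(1) \<epsilon>1(2) \<epsilon>2(2)
    unfolding hom_def by auto
  then obtain k1 where k1: "hom C k1 (Dom C \<epsilon>1) I" "m \<cdot> k1 = H \<cdot> \<epsilon>1"
    using regular_epi_mono_diagonal[OF \<epsilon>2(1) m_mono] k(1) hom_comp[OF \<epsilon>1(2) H(1)] \<epsilon>2(2) m
    unfolding hom_def by auto
  then obtain t where t: "hom C t Q I" "m \<cdot> t = H"
    using regular_epi_mono_diagonal[OF \<epsilon>1(1) m_mono] H(1) \<epsilon>1(2) m unfolding hom_def by auto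
  have "(\<pi>1 \<cdot> m) \<cdot> t = (\<pi>1 \<cdot> m) \<cdot> p" "(\<pi>2 \<cdot> m) \<cdot> t = (\<pi>2 \<cdot> m) \<cdot> q"
    using t H p q m \<pi>1 \<pi>2 unfolding hom_def by simp_all
  then show "\<exists>t. hom C t (Dom C p) I \<and> (\<pi>1 \<cdot> m) \<cdot> t = (\<pi>1 \<cdot> m) \<cdot> p \<and> (\<pi>2 \<cdot> m) \<cdot> t = (\<pi>2 \<cdot> m) \<cdot> q"
    using t(1) unfolding Q_def by blast
qed

end

theorem theorem7p8:
  fixes C :: "('o, 'a) cat" and \<Sigma> :: "('a \<times> 'a) set"
  assumes "regular_category C"
    and "fibrational C \<Sigma>"
    and "sigma_maltsev C \<Sigma>"
    and "X \<in> Obj C" and "Y \<in> Obj C"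
    and "hom C f X Y" and "regular_epi C f"
    and "sigma_relation C \<Sigma> X S d0 d1 s0"
    and "direct_image_data C f Y S d0 d1 P \<pi>1 \<pi>2 I e m"
  shows "relation C Y I (Comp C \<pi>1 m) (Comp C \<pi>2 m) \<and>
         transitive_rel C Y I (Comp C \<pi>1 m) (Comp C \<pi>2 m) \<and>
         (sigma_equivalence_relation C \<Sigma> X S d0 d1 s0 \<longrightarrow>
            equivalence_rel C Y I (Comp C \<pi>1 m) (Comp C \<pi>2 m))"
proof -
  have s0: "reflexive_with C X S d0 d1 s0" "(d0, s0) \<in> \<Sigma>"
    and d: "hom C d0 S X" "hom C d1 S X"
    using assms(8) unfolding sigma_relation_def relation_def by simp_all
  interpret direct_image C f X Y S d0 d1 P \<pi>1 \<pi>2 I e m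
    by unfold_locales (use assms(1,6,9) d in blast)+
  show ?thesis
    using relation_image transitive_image[OF assms(3) s0(2,1)] reflexive_image[OF assms(7) s0(1)]
      symmetric_image
    unfolding sigma_equivalence_relation_def equivalence_rel_def by blast
qed

end
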